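(* Let $A$ be a finite skew brace with $(A,+)$ abelian such that $\Theta(A)$ has exactly one vertex. Then $A$ is isomorphic to one of: (1) $\mathbb{Z}/4\mathbb{Z}$ with its usual addition and $x\circ y=x+y+2xy$; (2) $\mathbb{Z}/2\mathbb{Z}\times\mathbb{Z}/2\mathbb{Z}$ with componentwise addition and $(x_1,y_1)\circ(x_2,y_2)=(x_1+x_2+y_1y_2,\,y_1+y_2)$; (3) $\mathbb{Z}/2\mathbb{Z}\times\mathbb{Z}/4\mathbb{Z}$ with componentwise addition and $(x_1,y_1)\circ(x_2,y_2)=\big(x_1+x_2+\varepsilon(y_1)y_2,\,y_1+y_2+2y_1y_2\big)$, where $\varepsilon(y_1)=0$ if $y_1\in\{0,1\}$ and $\varepsilon(y_1)=1$ if $y_1\in\{2,3\}$, and $\varepsilon(y_1)y_2$ is computed in $\mathbb{Z}/2\mathbb{Z}$.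
   Context: A skew brace is a triple $(A,+,\circ)$ where $(A,+)$ and $(A,\circ)$ are groups with $a\circ(b+c)=a\circ b-a+a\circ c$. $\lambda_a(b)=-a+a\circ b$; $\theta_{(a,b)}(c)=a+\lambda_b(c)-a$ defines an action of $(A,+)\rtimes_\lambda(A,\circ)$ on $(A,+)$ by automorphisms. $\Theta(A)$ is the graph whose vertices are the $\theta$-orbits of size $>1$, two distinct vertices $L_1,L_2$ adjacent iff $\gcd(|L_1|,|L_2|)\ne1$. *)

theory Defs
  imports "HOL-Algebra.Group"
begin

text \<open>A skew brace is given by two group structures on the same carrier:
  P is (A,+) (written multiplicatively in HOL-Algebra), C is (A,\<circ>).\<close>

definition skew_brace :: "'a monoid \<Rightarrow> 'a monoid \<Rightarrow> bool" where
  "skew_brace P C \<longleftrightarrow> group P \<and> group C \<and> carrier C = carrier P \<and>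
     (\<forall>a\<in>carrier P. \<forall>b\<in>carrier P. \<forall>c\<in>carrier P.
        a \<otimes>\<^bsub>C\<^esub> (b \<otimes>\<^bsub>P\<^esub> c)
          = ((a \<otimes>\<^bsub>C\<^esub> b) \<otimes>\<^bsub>P\<^esub> inv\<^bsub>P\<^esub> a) \<otimes>\<^bsub>P\<^esub> (a \<otimes>\<^bsub>C\<^esub> c))"

definition brace_lambda :: "'a monoid \<Rightarrow> 'a monoid \<Rightarrow> 'a \<Rightarrow> 'a \<Rightarrow> 'a" where
  "brace_lambda P C a b = inv\<^bsub>P\<^esub> a \<otimes>\<^bsub>P\<^esub> (a \<otimes>\<^bsub>C\<^esub> b)"

definition brace_theta :: "'a monoid \<Rightarrow> 'a monoid \<Rightarrow> 'a \<Rightarrow> 'a \<Rightarrow> 'a \<Rightarrow> 'a" where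
  "brace_theta P C a b c = (a \<otimes>\<^bsub>P\<^esub> brace_lambda P C b c) \<otimes>\<^bsub>P\<^esub> inv\<^bsub>P\<^esub> a"

text \<open>Orbit of c under the theta-action of (A,+) \<rtimes> (A,o); the image of the action
  is a group of permutations, so the orbit is the set of all theta_(a,b)(c).\<close>
definition theta_orbit :: "'a monoid \<Rightarrow> 'a monoid \<Rightarrow> 'a \<Rightarrow> 'a set" where
  "theta_orbit P C c = {brace_theta P C a b c | a b. a \<in> carrier P \<and> b \<in> carrier P}"

definition theta_vertices :: "'a monoid \<Rightarrow> 'a monoid \<Rightarrow> 'a set set" where
  "theta_vertices P C = {L. L \<in> theta_orbit P C ` carrier P \<and> card L > 1}"

definition brace_iso ::
  "'a monoid \<Rightarrow> 'a monoid \<Rightarrow> 'b monoid \<Rightarrow> 'b monoid \<Rightarrow> bool" where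
  "brace_iso P C P' C' \<longleftrightarrow> (\<exists>f. bij_betw f (carrier P) (carrier P') \<and>
     (\<forall>x\<in>carrier P. \<forall>y\<in>carrier P.
        f (x \<otimes>\<^bsub>P\<^esub> y) = f x \<otimes>\<^bsub>P'\<^esub> f y \<and>
        f (x \<otimes>\<^bsub>C\<^esub> y) = f x \<otimes>\<^bsub>C'\<^esub> f y))"

definition Z4_add :: "int monoid" where
  "Z4_add = \<lparr>carrier = {0..3}, mult = (\<lambda>x y. (x + y) mod 4), one = 0\<rparr>"
definition Z4_circ :: "int monoid" where
  "Z4_circ = \<lparr>carrier = {0..3}, mult = (\<lambda>x y. (x + y + 2*x*y) mod 4), one = 0\<rparr>"

definition Z2Z2_add :: "(int \<times> int) monoid" where
  "Z2Z2_add = \<lparr>carrier = {0..1} \<times> {0..1},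
     mult = (\<lambda>(x1,y1) (x2,y2). ((x1 + x2) mod 2, (y1 + y2) mod 2)), one = (0,0)\<rparr>"
definition Z2Z2_circ :: "(int \<times> int) monoid" where
  "Z2Z2_circ = \<lparr>carrier = {0..1} \<times> {0..1},
     mult = (\<lambda>(x1,y1) (x2,y2). ((x1 + x2 + y1*y2) mod 2, (y1 + y2) mod 2)), one = (0,0)\<rparr>"

definition eps4 :: "int \<Rightarrow> int" where
  "eps4 y = (if y \<in> {0,1} then 0 else 1)"
definition Z2Z4_add :: "(int \<times> int) monoid" where
  "Z2Z4_add = \<lparr>carrier = {0..1} \<times> {0..3},
     mult = (\<lambda>(x1,y1) (x2,y2). ((x1 + x2) mod 2, (y1 + y2) mod 4)), one = (0,0)\<rparr>"
definition Z2Z4_circ :: "(int \<times> int) monoid" where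
  "Z2Z4_circ = \<lparr>carrier = {0..1} \<times> {0..3},
     mult = (\<lambda>(x1,y1) (x2,y2). ((x1 + x2 + eps4 y1 * y2) mod 2, (y1 + y2 + 2*y1*y2) mod 4)),
     one = (0,0)\<rparr>"

end

theory Submission
  imports Defs "HOL-Algebra.Group_Action"
begin

text \<open>Since \<open>(A,+)\<close> is abelian, \<open>\<theta>_(a,b) = \<lambda>_b\<close>, so the vertices of \<open>\<Theta>(A)\<close> are the
  nontrivial orbits of the action \<open>\<lambda>\<close> of \<open>(A,\<circ>)\<close> on \<open>A\<close>, and the trivial orbits form the
  subgroup \<open>F\<close> of \<open>\<lambda>\<close>-fixed points. A single vertex means that \<open>A - F\<close> is one orbit; by
  orbit-stabilizer its size divides \<open>|A| = |F| + |A - F|\<close>, and it contains a coset of \<open>F\<close>, so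
  \<open>F\<close> has index 2 and \<open>A - F = x + F\<close>. Each \<open>\<lambda>\<^sub>a\<close> then acts on \<open>A - F\<close> as translation by
  some \<open>s(a) \<in> F\<close>, whence \<open>a \<circ> b = a + b\<close> for \<open>b \<in> F\<close> and \<open>a \<circ> b = a + b + s(a)\<close>
  otherwise. The map \<open>s\<close> is a surjective homomorphism \<open>(A,\<circ>) \<rightarrow> F\<close>, \<open>F\<close> has exponent 2,
  \<open>s \<circ> s\<close> vanishes on \<open>F\<close> and \<open>F = s(F) \<union> (s(x) + s(F))\<close>. Comparing \<open>|s(F)|\<cdot>|ker s| \<le> |F|\<close>
  with \<open>|F| \<le> 2|s(F)|\<close> and \<open>s(F) \<subseteq> ker s\<close> gives \<open>|s(F)| \<le> 2\<close>; in each case the value of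
  \<open>x + x \<in> F\<close> pins the brace down to one of the three models.\<close>

lemma brace_iso_onto:
  fixes P C :: "'a monoid" and P' C' :: "'b monoid"
  assumes carrier: "carrier P' = S" and fin: "finite S"
    and onto: "\<psi> ` S = carrier P" and card: "card S = card (carrier P)"
    and closed: "\<And>p q. p \<in> S \<Longrightarrow> q \<in> S \<Longrightarrow> p \<otimes>\<^bsub>P'\<^esub> q \<in> S \<and> p \<otimes>\<^bsub>C'\<^esub> q \<in> S"
    and hom_add: "\<And>p q. p \<in> S \<Longrightarrow> q \<in> S \<Longrightarrow> \<psi> (p \<otimes>\<^bsub>P'\<^esub> q) = \<psi> p \<otimes>\<^bsub>P\<^esub> \<psi> q"
    and hom_circ: "\<And>p q. p \<in> S \<Longrightarrow> q \<in> S \<Longrightarrow> \<psi> (p \<otimes>\<^bsub>C'\<^esub> q) = \<psi> p \<otimes>\<^bsub>C\<^esub> \<psi> q"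
  shows "brace_iso P C P' C'"
proof -
  have "inj_on \<psi> S"
    using eq_card_imp_inj_on[OF fin, of \<psi>] onto card by simp
  then have bij: "bij_betw \<psi> S (carrier P)"
    using onto by (rule bij_betw_imageI)
  let ?g = "inv_into S \<psi>"
  have g: "?g (\<psi> p) = p" if "p \<in> S" for p
    using bij_betw_inv_into_left[OF bij that] .
  have "?g (x \<otimes>\<^bsub>P\<^esub> y) = ?g x \<otimes>\<^bsub>P'\<^esub> ?g y \<and> ?g (x \<otimes>\<^bsub>C\<^esub> y) = ?g x \<otimes>\<^bsub>C'\<^esub> ?g y"
    if "x \<in> carrier P" "y \<in> carrier P" for x y
  proof -
    have "x \<in> \<psi> ` S" "y \<in> \<psi> ` S"
      using that onto by simp_all
    then obtain p q where pq: "p \<in> S" "q \<in> S" and xy: "x = \<psi> p" "y = \<psi> q"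
      by blast
    then have "x \<otimes>\<^bsub>P\<^esub> y = \<psi> (p \<otimes>\<^bsub>P'\<^esub> q)" "x \<otimes>\<^bsub>C\<^esub> y = \<psi> (p \<otimes>\<^bsub>C'\<^esub> q)"
      using hom_add hom_circ by simp_all
    then show ?thesis
      using g closed[OF pq] pq xy by simp
  qed
  moreover have "bij_betw ?g (carrier P) (carrier P')"
    using bij_betw_inv_into[OF bij] carrier by simp
  ultimately show ?thesis
    unfolding brace_iso_def by blast
qed

locale abelian_skew_brace = P: comm_group P + C: group C
  for P :: "'a monoid" and C :: "'a monoid" +
  assumes carrier_C: "carrier C = carrier P"
    and left_distrib: "\<And>a b c. \<lbrakk>a \<in> carrier P; b \<in> carrier P; c \<in> carrier P\<rbrakk> \<Longrightarrow>
      a \<otimes>\<^bsub>C\<^esub> (b \<otimes>\<^bsub>P\<^esub> c) = ((a \<otimes>\<^bsub>C\<^esub> b) \<otimes>\<^bsub>P\<^esub> inv\<^bsub>P\<^esub> a) \<otimes>\<^bsub>P\<^esub> (a \<otimes>\<^bsub>C\<^esub> c)"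
begin

abbreviation padd (infixl "\<oplus>" 65) where "a \<oplus> b \<equiv> a \<otimes>\<^bsub>P\<^esub> b"
abbreviation pzero ("\<zero>") where "\<zero> \<equiv> \<one>\<^bsub>P\<^esub>"
abbreviation pneg ("\<ominus> _" [81] 80) where "\<ominus> a \<equiv> inv\<^bsub>P\<^esub> a"
abbreviation circ (infixl "\<cdot>" 70) where "a \<cdot> b \<equiv> a \<otimes>\<^bsub>C\<^esub> b"
abbreviation "A \<equiv> carrier P"
abbreviation "lam \<equiv> brace_lambda P C"

lemma circ_closed [simp]: "a \<in> A \<Longrightarrow> b \<in> A \<Longrightarrow> a \<cdot> b \<in> A"
  using C.m_closed carrier_C by auto

lemma circ_inv_closed [simp]: "a \<in> A \<Longrightarrow> inv\<^bsub>C\<^esub> a \<in> A"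
  using C.inv_closed carrier_C by auto

lemma circ_zero_right [simp]:
  assumes "a \<in> A" shows "a \<cdot> \<zero> = a"
proof -
  have "\<zero> \<oplus> a \<cdot> \<zero> = (a \<cdot> \<zero> \<oplus> \<ominus> a) \<oplus> a \<cdot> \<zero>"
    using left_distrib[of a \<zero> \<zero>] assms by simp
  then have "a \<cdot> \<zero> \<oplus> \<ominus> a = \<zero>"
    using assms by simp
  then show ?thesis
    using assms by (metis P.inv_closed P.inv_equality P.inv_inv P.m_comm P.one_closed circ_closed)
qed

lemma one_C: "\<one>\<^bsub>C\<^esub> = \<zero>"
  using circ_zero_right[of "\<one>\<^bsub>C\<^esub>"] C.l_one[of \<zero>] C.one_closed carrier_C by auto

lemma circ_zero_left [simp]: "b \<in> A \<Longrightarrow> \<zero> \<cdot> b = b"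
  using C.l_one carrier_C one_C by auto

lemma lam_closed [simp]: "a \<in> A \<Longrightarrow> b \<in> A \<Longrightarrow> lam a b \<in> A"
  by (simp add: brace_lambda_def)

lemma circ_eq_add_lam: "a \<in> A \<Longrightarrow> b \<in> A \<Longrightarrow> a \<cdot> b = a \<oplus> lam a b"
  by (simp add: brace_lambda_def P.m_assoc[symmetric])

lemma lam_add: "\<lbrakk>a \<in> A; b \<in> A; c \<in> A\<rbrakk> \<Longrightarrow> lam a (b \<oplus> c) = lam a b \<oplus> lam a c"
  by (simp add: brace_lambda_def left_distrib P.m_ac)

lemma lam_zero_left [simp]: "b \<in> A \<Longrightarrow> lam \<zero> b = b"
  by (simp add: brace_lambda_def)

lemma lam_zero_right [simp]: "a \<in> A \<Longrightarrow> lam a \<zero> = \<zero>"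
  by (simp add: brace_lambda_def)

lemma lam_neg:
  assumes "a \<in> A" "b \<in> A"
  shows "lam a (\<ominus> b) = \<ominus> lam a b"
proof -
  have "lam a (\<ominus> b) \<oplus> lam a b = \<zero>"
    using lam_add[of a "\<ominus> b" b] assms by simp
  then show ?thesis
    using assms by (simp add: P.inv_equality)
qed

lemma lam_circ:
  assumes "a \<in> A" "b \<in> A" "c \<in> A"
  shows "lam (a \<cdot> b) c = lam a (lam b c)"
proof -
  have "(a \<cdot> b) \<cdot> c = a \<cdot> (b \<oplus> lam b c)"
    using assms C.m_assoc carrier_C circ_eq_add_lam[of b c] by simp
  also have "\<dots> = a \<cdot> b \<oplus> (\<ominus> a \<oplus> a \<cdot> lam b c)"
    using assms left_distrib by (simp add: P.m_assoc)
  finally show ?thesis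
    using assms by (simp add: brace_lambda_def P.m_assoc[symmetric])
qed

lemma theta_eq_lam: "\<lbrakk>a \<in> A; b \<in> A; c \<in> A\<rbrakk> \<Longrightarrow> brace_theta P C a b c = lam b c"
  using P.m_comm[of a "lam b c"] by (simp add: brace_theta_def P.m_assoc)

lemma lam_bij:
  assumes "a \<in> A"
  shows "bij_betw (lam a) A A"
proof (rule bij_betw_imageI)
  show "inj_on (lam a) A"
  proof (rule inj_onI)
    fix b c assume "b \<in> A" "c \<in> A" "lam a b = lam a c"
    then have "a \<cdot> b = a \<cdot> c"
      using assms by (simp add: circ_eq_add_lam)
    then show "b = c"
      using assms \<open>b \<in> A\<close> \<open>c \<in> A\<close> carrier_C by simp
  qed
  show "lam a ` A = A"
  proof
    show "A \<subseteq> lam a ` A"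
    proof
      fix b assume b: "b \<in> A"
      then have "b = lam a (lam (inv\<^bsub>C\<^esub> a) b)"
        using assms lam_circ[of a "inv\<^bsub>C\<^esub> a" b] C.r_inv[of a] carrier_C one_C by simp
      then show "b \<in> lam a ` A"
        using assms b by (intro image_eqI[of b _ "lam (inv\<^bsub>C\<^esub> a) b"]) simp_all
    qed
  qed (use assms in auto)
qed

definition lambda_action :: "'a \<Rightarrow> 'a \<Rightarrow> 'a" where
  "lambda_action a = (\<lambda>b\<in>A. lam a b)"

lemma group_action_lambda: "group_action C A lambda_action"
proof -
  have Bij: "lambda_action a \<in> Bij A" if "a \<in> A" for a
    using lam_bij[OF that] by (simp add: Bij_def lambda_action_def)
  have "lambda_action (a \<cdot> b) = lambda_action a \<otimes>\<^bsub>BijGroup A\<^esub> lambda_action b"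
    if "a \<in> A" "b \<in> A" for a b
  proof -
    have "lambda_action (a \<cdot> b) = compose A (lambda_action a) (lambda_action b)"
      using that by (auto simp: lambda_action_def compose_def lam_circ)
    then show ?thesis
      using Bij that by (simp add: BijGroup_def)
  qed
  then have "lambda_action \<in> hom C (BijGroup A)"
    using Bij carrier_C by (intro homI) (simp_all add: BijGroup_def)
  then show ?thesis
    unfolding group_action_def group_hom_def group_hom_axioms_def
    using C.group_axioms group_BijGroup by blast
qed

sublocale lambda: group_action C A lambda_action
  by (rule group_action_lambda)

lemma orbit_lambda: "c \<in> A \<Longrightarrow> orbit C lambda_action c = (\<lambda>a. lam a c) ` A"
  by (auto simp: orbit_def lambda_action_def carrier_C)

lemma theta_orbit_eq_orbit: "c \<in> A \<Longrightarrow> theta_orbit P C c = orbit C lambda_action c"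
  by (force simp: theta_orbit_def orbit_lambda theta_eq_lam)

lemma orbit_eq_of_mem:
  assumes c: "c \<in> A" and d: "d \<in> orbit C lambda_action c"
  shows "orbit C lambda_action d = orbit C lambda_action c"
proof -
  have sub: "orbit C lambda_action x \<subseteq> orbit C lambda_action y"
    if x: "x \<in> A" and y: "y \<in> A" and xy: "x \<in> orbit C lambda_action y" for x y
  proof
    fix z assume z: "z \<in> orbit C lambda_action x"
    then have "z \<in> A"
      using x by (auto simp: orbit_lambda)
    then show "z \<in> orbit C lambda_action y"
      using lambda.orbit_trans[OF y x _ xy z] by simp
  qed
  have "d \<in> A"
    using c d by (auto simp: orbit_lambda)
  show ?thesis
    using sub[OF \<open>d \<in> A\<close> c d] sub[OF c \<open>d \<in> A\<close> lambda.orbit_sym[OF c \<open>d \<in> A\<close> d]]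
    by (rule subset_antisym)
qed

definition fixed :: "'a set" where
  "fixed = {c \<in> A. \<forall>a\<in>A. lam a c = c}"

lemma fixed_closed: "c \<in> fixed \<Longrightarrow> c \<in> A"
  by (simp add: fixed_def)

lemma fixed_subset: "fixed \<subseteq> A"
  by (auto simp: fixed_def)

lemma lam_fixed: "c \<in> fixed \<Longrightarrow> a \<in> A \<Longrightarrow> lam a c = c"
  by (simp add: fixed_def)

lemma zero_fixed [simp]: "\<zero> \<in> fixed"
  by (simp add: fixed_def)

lemma fixed_add: "c \<in> fixed \<Longrightarrow> d \<in> fixed \<Longrightarrow> c \<oplus> d \<in> fixed"
  by (simp add: fixed_def lam_add)

lemma fixed_neg: "c \<in> fixed \<Longrightarrow> \<ominus> c \<in> fixed"
  by (simp add: fixed_def lam_neg)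

lemma orbit_fixed: "c \<in> fixed \<Longrightarrow> orbit C lambda_action c = {c}"
  by (auto simp: orbit_lambda fixed_def)

lemma card_orbit_gt_1_iff:
  assumes fin: "finite A" and c: "c \<in> A"
  shows "1 < card (orbit C lambda_action c) \<longleftrightarrow> c \<notin> fixed"
proof
  assume "c \<notin> fixed"
  then obtain a where a: "a \<in> A" "lam a c \<noteq> c"
    using c by (auto simp: fixed_def)
  have "{c, lam a c} \<subseteq> orbit C lambda_action c"
    using c a lambda.orbit_refl by (auto simp: orbit_lambda)
  moreover have "finite (orbit C lambda_action c)"
    using fin c by (simp add: orbit_lambda)
  ultimately have "card {c, lam a c} \<le> card (orbit C lambda_action c)"
    by (rule card_mono[rotated])
  then show "1 < card (orbit C lambda_action c)"
    using a by simp
qed (auto simp: orbit_fixed)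

lemma theta_vertices_eq:
  assumes "finite A"
  shows "theta_vertices P C = orbit C lambda_action ` (A - fixed)"
  using card_orbit_gt_1_iff[OF assms]
  by (auto simp: theta_vertices_def theta_orbit_eq_orbit)

end

locale single_vertex_brace = abelian_skew_brace +
  assumes finite_carrier: "finite (carrier P)"
    and single_vertex: "card (theta_vertices P C) = 1"
begin

lemma finite_fixed: "finite fixed"
  using finite_subset[OF fixed_subset finite_carrier] .

lemma orbit_nonfixed:
  assumes "c \<in> A - fixed"
  shows "orbit C lambda_action c = A - fixed"
proof -
  have "card (orbit C lambda_action ` (A - fixed)) = 1"
    using single_vertex theta_vertices_eq[OF finite_carrier] by simp
  then obtain V where V: "orbit C lambda_action ` (A - fixed) = {V}"
    by (rule card_1_singletonE)
  then have orbit_V: "orbit C lambda_action x = V" if "x \<in> A - fixed" for x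
    using that by blast
  have "A - fixed \<subseteq> V"
    using orbit_V lambda.orbit_refl by blast
  moreover have "V \<subseteq> A - fixed"
  proof
    fix y assume y: "y \<in> V"
    have "y \<in> A" "orbit C lambda_action y = V"
      using y orbit_V[OF assms] orbit_eq_of_mem[of c y] assms by (auto simp: orbit_lambda)
    moreover have "1 < card V"
      using orbit_V[OF assms] card_orbit_gt_1_iff[OF finite_carrier, of c] assms by simp
    ultimately show "y \<in> A - fixed"
      using card_orbit_gt_1_iff[OF finite_carrier, of y] by simp
  qed
  ultimately show ?thesis
    using orbit_V[OF assms] by blast
qed

lemma card_nonfixed_gt_1: "1 < card (A - fixed)"
proof -
  have "orbit C lambda_action ` (A - fixed) \<noteq> {}"
    using single_vertex theta_vertices_eq[OF finite_carrier] by force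
  then obtain c where "c \<in> A - fixed"
    by blast
  then show ?thesis
    using orbit_nonfixed card_orbit_gt_1_iff[OF finite_carrier, of c] by simp
qed

lemma add_fixed_nonfixed:
  assumes x: "x \<in> A - fixed" and c: "c \<in> fixed"
  shows "x \<oplus> c \<in> A - fixed"
proof -
  have "x = (x \<oplus> c) \<oplus> \<ominus> c"
    using x c fixed_closed by (simp add: P.m_assoc)
  then have "x \<oplus> c \<notin> fixed"
    using x c fixed_add fixed_neg by force
  then show ?thesis
    using x c fixed_closed by simp
qed

lemma card_coset_fixed: "x \<in> A \<Longrightarrow> card ((\<lambda>c. x \<oplus> c) ` fixed) = card fixed"
  by (intro card_image inj_onI) (simp add: fixed_closed)

lemma card_carrier_split: "card A = card fixed + card (A - fixed)"
  using card_Diff_subset[OF finite_fixed fixed_subset]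
    card_mono[OF finite_carrier fixed_subset]
  by simp

lemma nonfixed_nonempty: "A - fixed \<noteq> {}"
  using card_nonfixed_gt_1 by (intro notI) simp

lemma card_fixed_eq_card_nonfixed: "card fixed = card (A - fixed)"
proof -
  obtain x where x: "x \<in> A - fixed"
    using nonfixed_nonempty by blast
  have "card A = card (A - fixed) * card (stabilizer C lambda_action x)"
    using lambda.orbit_stabilizer_theorem[of x] x orbit_nonfixed[OF x] carrier_C
    by (simp add: order_def)
  then have "card (A - fixed) dvd card fixed + card (A - fixed)"
    using card_carrier_split by simp
  then have "card (A - fixed) dvd card fixed"
    by (simp add: dvd_add_left_iff)
  moreover have "0 < card fixed"
    using finite_fixed zero_fixed card_gt_0_iff by blast
  moreover have "card fixed \<le> card (A - fixed)"
    using card_mono[of "A - fixed" "(\<lambda>c. x \<oplus> c) ` fixed"] finite_carrier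
      add_fixed_nonfixed[OF x] card_coset_fixed[of x] x by auto
  ultimately show ?thesis
    using dvd_imp_le le_antisym by blast
qed

lemma nonfixed_eq_coset:
  assumes "x \<in> A - fixed"
  shows "A - fixed = (\<lambda>c. x \<oplus> c) ` fixed"
proof -
  have sub: "(\<lambda>c. x \<oplus> c) ` fixed \<subseteq> A - fixed"
    using add_fixed_nonfixed[OF assms] by blast
  have "card ((\<lambda>c. x \<oplus> c) ` fixed) = card (A - fixed)"
    using card_coset_fixed card_fixed_eq_card_nonfixed assms by simp
  then show ?thesis
    using card_subset_eq[OF finite_Diff[OF finite_carrier] sub] by simp
qed

lemma card_carrier: "card A = 2 * card fixed"
  using card_carrier_split card_fixed_eq_card_nonfixed by simp

definition base :: 'a where
  "base = (SOME x. x \<in> A - fixed)"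

lemma base_nonfixed: "base \<in> A - fixed"
  unfolding base_def using someI_ex[of "\<lambda>x. x \<in> A - fixed"] nonfixed_nonempty by blast

lemma base_closed [simp]: "base \<in> A"
  using base_nonfixed by simp

definition shift :: "'a \<Rightarrow> 'a" where
  "shift a = \<ominus> base \<oplus> lam a base"

lemma lam_base: "a \<in> A \<Longrightarrow> lam a base = base \<oplus> shift a"
  by (simp add: shift_def P.m_assoc[symmetric])

lemma shift_eqI: "\<lbrakk>a \<in> A; c \<in> A; lam a base = base \<oplus> c\<rbrakk> \<Longrightarrow> shift a = c"
  by (simp add: shift_def P.m_assoc[symmetric])

lemma shift_fixed:
  assumes "a \<in> A"
  shows "shift a \<in> fixed"
proof -
  have "lam a base \<in> A - fixed"
    using assms orbit_nonfixed[OF base_nonfixed] by (auto simp: orbit_lambda)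
  then obtain c where c: "c \<in> fixed" and "lam a base = base \<oplus> c"
    using nonfixed_eq_coset[OF base_nonfixed] by blast
  then show ?thesis
    using shift_eqI[OF assms fixed_closed[OF c]] by simp
qed

lemma shift_closed [simp]: "a \<in> A \<Longrightarrow> shift a \<in> A"
  using shift_fixed fixed_closed by blast

lemma lam_nonfixed:
  assumes a: "a \<in> A" and y: "y \<in> A - fixed"
  shows "lam a y = y \<oplus> shift a"
proof -
  obtain d where d: "d \<in> fixed" "y = base \<oplus> d"
    using nonfixed_eq_coset[OF base_nonfixed] y by blast
  then have "lam a y = base \<oplus> shift a \<oplus> d"
    using a lam_add lam_fixed lam_base fixed_closed by simp
  then show ?thesis
    using d a fixed_closed by (simp add: P.m_ac)
qed

lemma circ_eq_cases:
  assumes "a \<in> A" "b \<in> A"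
  shows "a \<cdot> b = (if b \<in> fixed then a \<oplus> b else a \<oplus> b \<oplus> shift a)"
proof (cases "b \<in> fixed")
  case True
  then show ?thesis
    using assms by (simp add: circ_eq_add_lam lam_fixed)
next
  case False
  then show ?thesis
    using assms by (simp add: circ_eq_add_lam lam_nonfixed P.m_assoc)
qed

lemma shift_onto: "shift ` A = fixed"
proof
  show "fixed \<subseteq> shift ` A"
  proof
    fix c assume c: "c \<in> fixed"
    then have "base \<oplus> c \<in> orbit C lambda_action base"
      using add_fixed_nonfixed[OF base_nonfixed] orbit_nonfixed[OF base_nonfixed] by simp
    then obtain a where "a \<in> A" "lam a base = base \<oplus> c"
      by (auto simp: orbit_lambda)
    then show "c \<in> shift ` A"
      using shift_eqI[of a c] fixed_closed[OF c] by (intro image_eqI[of c shift a]) simp_all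
  qed
qed (use shift_fixed in blast)

lemma double_nonfixed:
  assumes y: "y \<in> A - fixed"
  shows "y \<oplus> y \<in> fixed"
proof (rule ccontr)
  assume "y \<oplus> y \<notin> fixed"
  then have "y \<oplus> y \<in> A - fixed"
    using y by simp
  then have "y \<oplus> y \<in> (\<lambda>c. y \<oplus> c) ` fixed"
    by (simp only: nonfixed_eq_coset[OF y])
  then obtain c where "c \<in> fixed" "y \<oplus> y = y \<oplus> c"
    by (rule imageE)
  then have "y = c"
    using y fixed_closed by simp
  then show False
    using y \<open>c \<in> fixed\<close> by simp
qed

lemma fixed_double:
  assumes c: "c \<in> fixed"
  shows "c \<oplus> c = \<zero>"
proof -
  have "c \<in> shift ` A"
    using c shift_onto by simp
  then obtain a where a: "a \<in> A" "shift a = c"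
    by blast
  have "base \<oplus> base = lam a (base \<oplus> base)"
    using lam_fixed[OF double_nonfixed[OF base_nonfixed] a(1)] by simp
  also have "\<dots> = (base \<oplus> c) \<oplus> (base \<oplus> c)"
    using a lam_add[of a base base] lam_base by simp
  also have "\<dots> = (base \<oplus> base) \<oplus> (c \<oplus> c)"
    using c fixed_closed by (simp add: P.m_ac)
  finally show ?thesis
    using c fixed_closed by simp
qed

lemma fixed_neg_eq: "c \<in> fixed \<Longrightarrow> \<ominus> c = c"
  using fixed_double P.inv_equality[of c c] fixed_closed by simp

lemma shift_zero [simp]: "shift \<zero> = \<zero>"
  by (simp add: shift_def)

lemma shift_circ:
  assumes "a \<in> A" "b \<in> A"
  shows "shift (a \<cdot> b) = shift a \<oplus> shift b"
proof (rule shift_eqI)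
  have "lam (a \<cdot> b) base = lam a (base \<oplus> shift b)"
    using assms lam_circ[of a b base] by (simp add: lam_base)
  also have "\<dots> = base \<oplus> shift a \<oplus> shift b"
    using assms by (simp add: lam_add lam_base lam_fixed shift_fixed)
  finally show "lam (a \<cdot> b) base = base \<oplus> (shift a \<oplus> shift b)"
    using assms by (simp add: P.m_assoc)
qed (use assms in simp_all)

lemma shift_add_fixed:
  assumes "a \<in> A" "c \<in> fixed"
  shows "shift (a \<oplus> c) = shift a \<oplus> shift c"
  using assms shift_circ[of a c] circ_eq_cases[of a c] fixed_closed by simp

lemma shift_shift:
  assumes c: "c \<in> fixed"
  shows "shift (shift c) = \<zero>"
proof -
  have cA: "c \<in> A" and sc: "shift c \<in> fixed"
    using c fixed_closed shift_fixed by auto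
  have "c \<cdot> base = base \<oplus> (c \<oplus> shift c)"
    using circ_eq_cases[OF cA base_closed] base_nonfixed cA by (simp add: P.m_ac)
  then have "shift c \<oplus> shift base = shift base \<oplus> (shift c \<oplus> shift (shift c))"
    using shift_circ[OF cA base_closed] shift_add_fixed[OF base_closed fixed_add[OF c sc]]
      shift_add_fixed[OF cA sc] cA by simp
  then show ?thesis
    using cA by (simp add: P.m_ac)
qed

lemma shift_double:
  assumes y: "y \<in> A - fixed"
  shows "shift (y \<oplus> y) = shift (shift y)"
proof -
  have yA: "y \<in> A" and sy: "shift y \<in> fixed"
    using y shift_fixed by auto
  have "y \<cdot> y = (y \<oplus> y) \<oplus> shift y"
    using circ_eq_cases[OF yA yA] y by simp
  then have "shift y \<oplus> shift y = shift (y \<oplus> y) \<oplus> shift (shift y)"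
    using shift_circ[OF yA yA] shift_add_fixed[OF _ sy, of "y \<oplus> y"] yA by simp
  then have "shift (y \<oplus> y) \<oplus> shift (shift y) = \<zero>"
    using fixed_double[OF sy] by simp
  then have "\<ominus> shift (shift y) = shift (y \<oplus> y)"
    using yA P.inv_equality by simp
  then show ?thesis
    using fixed_neg_eq[OF shift_fixed[OF shift_closed[OF yA]]] by simp
qed

lemma fixed_eq_shift_image_union:
  "fixed = shift ` fixed \<union> (\<lambda>i. shift base \<oplus> i) ` shift ` fixed"
proof
  show "fixed \<subseteq> shift ` fixed \<union> (\<lambda>i. shift base \<oplus> i) ` shift ` fixed"
  proof
    fix c assume "c \<in> fixed"
    then have "c \<in> shift ` A"
      using shift_onto by simp
    then obtain a where a: "a \<in> A" "c = shift a"
      by blast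
    show "c \<in> shift ` fixed \<union> (\<lambda>i. shift base \<oplus> i) ` shift ` fixed"
    proof (cases "a \<in> fixed")
      case True
      then show ?thesis
        using a by blast
    next
      case False
      then have "a \<in> A - fixed"
        using a by simp
      then have "a \<in> (\<lambda>d. base \<oplus> d) ` fixed"
        by (simp only: nonfixed_eq_coset[OF base_nonfixed])
      then obtain d where d: "d \<in> fixed" "a = base \<oplus> d"
        by blast
      then have "c = shift base \<oplus> shift d"
        using a shift_add_fixed[of base d] by simp
      then show ?thesis
        using d by blast
    qed
  qed
  show "shift ` fixed \<union> (\<lambda>i. shift base \<oplus> i) ` shift ` fixed \<subseteq> fixed"
    using shift_fixed fixed_closed fixed_add[OF shift_fixed[OF base_closed]] by auto
qed

lemma card_fixed_le_shift_image: "card fixed \<le> 2 * card (shift ` fixed)"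
proof -
  have "card fixed \<le> card (shift ` fixed) + card ((\<lambda>i. shift base \<oplus> i) ` shift ` fixed)"
    by (subst fixed_eq_shift_image_union) (rule card_Un_le)
  also have "\<dots> \<le> 2 * card (shift ` fixed)"
    using card_image_le[OF finite_imageI[OF finite_fixed], of "\<lambda>i. shift base \<oplus> i" shift]
    by simp
  finally show ?thesis .
qed

lemma card_shift_image_kernel_le:
  "card (shift ` fixed) * card {c \<in> fixed. shift c = \<zero>} \<le> card fixed"
proof -
  let ?I = "shift ` fixed" and ?K = "{c \<in> fixed. shift c = \<zero>}"
  let ?s = "inv_into fixed shift"
  have s: "?s i \<in> fixed" "shift (?s i) = i" if "i \<in> ?I" for i
    using that by (auto intro: inv_into_into f_inv_into_f)
  let ?h = "\<lambda>(i, k). ?s i \<oplus> k"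
  have "inj_on ?h (?I \<times> ?K)"
  proof (rule inj_onI)
    fix p q assume "p \<in> ?I \<times> ?K" "q \<in> ?I \<times> ?K" "?h p = ?h q"
    then obtain i k i' k' where pq: "p = (i, k)" "q = (i', k')"
      and i: "i \<in> ?I" "i' \<in> ?I" and k: "k \<in> ?K" "k' \<in> ?K" and eq: "?s i \<oplus> k = ?s i' \<oplus> k'"
      by auto
    have "shift (?s i \<oplus> k) = i" "shift (?s i' \<oplus> k') = i'"
      using s i k shift_add_fixed fixed_closed by auto
    then have "i = i'"
      using eq by simp
    then show "p = q"
      using eq s[OF i(1)] k fixed_closed pq by simp
  qed
  moreover have "?h ` (?I \<times> ?K) \<subseteq> fixed"
    using s fixed_add by auto
  ultimately have "card (?I \<times> ?K) \<le> card fixed"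
    using card_inj_on_le finite_fixed by blast
  then show ?thesis
    by (simp add: card_cartesian_product)
qed

lemma card_shift_image_le_2: "card (shift ` fixed) \<le> 2"
proof -
  let ?I = "shift ` fixed" and ?K = "{c \<in> fixed. shift c = \<zero>}"
  have "?I \<subseteq> ?K"
    using shift_fixed shift_shift fixed_closed by auto
  then have "card ?I * card ?I \<le> card ?I * card ?K"
    using finite_fixed card_mono[of ?K ?I] by simp
  also have "\<dots> \<le> 2 * card ?I"
    using card_shift_image_kernel_le card_fixed_le_shift_image by linarith
  moreover have "0 < card ?I"
    using finite_fixed zero_fixed by (simp add: card_gt_0_iff, blast)
  ultimately show ?thesis
    by simp
qed

lemma carrier_eq_fixed_union_coset:
  "y \<in> A - fixed \<Longrightarrow> A = fixed \<union> (\<lambda>c. y \<oplus> c) ` fixed"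
  using nonfixed_eq_coset fixed_subset by blast

lemma card_fixed_gt_1: "1 < card fixed"
  using card_fixed_eq_card_nonfixed card_nonfixed_gt_1 by simp

text \<open>By \<open>circ_eq_cases\<close> the circle operation is determined by \<open>\<oplus>\<close>, \<open>fixed\<close> and \<open>shift\<close>,
  so an additive isomorphism onto a model that carries \<open>fixed\<close> to \<open>N\<close> and \<open>shift\<close> to \<open>e\<close>
  is a brace isomorphism.\<close>

lemma brace_iso_model:
  fixes P' C' :: "'b monoid"
  assumes carrier: "carrier P' = S" and fin: "finite S" and card: "card S = card A"
    and \<psi>_closed: "\<And>p. p \<in> S \<Longrightarrow> \<psi> p \<in> A" and onto: "A \<subseteq> \<psi> ` S"
    and add_closed: "\<And>p q. p \<in> S \<Longrightarrow> q \<in> S \<Longrightarrow> p \<otimes>\<^bsub>P'\<^esub> q \<in> S"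
    and e_closed: "\<And>p. p \<in> S \<Longrightarrow> e p \<in> S"
    and hom_add: "\<And>p q. p \<in> S \<Longrightarrow> q \<in> S \<Longrightarrow> \<psi> (p \<otimes>\<^bsub>P'\<^esub> q) = \<psi> p \<oplus> \<psi> q"
    and fixed_iff: "\<And>p. p \<in> S \<Longrightarrow> \<psi> p \<in> fixed \<longleftrightarrow> p \<in> N"
    and shift_model: "\<And>p. p \<in> S \<Longrightarrow> shift (\<psi> p) = \<psi> (e p)"
    and circ_model: "\<And>p q. p \<in> S \<Longrightarrow> q \<in> S \<Longrightarrow>
      p \<otimes>\<^bsub>C'\<^esub> q = (if q \<in> N then p \<otimes>\<^bsub>P'\<^esub> q else p \<otimes>\<^bsub>P'\<^esub> q \<otimes>\<^bsub>P'\<^esub> e p)"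
  shows "brace_iso P C P' C'"
proof (rule brace_iso_onto[OF carrier fin])
  show "\<psi> ` S = A"
    using \<psi>_closed onto by blast
  show "card S = card A"
    by (fact card)
  fix p q assume p: "p \<in> S" and q: "q \<in> S"
  show "p \<otimes>\<^bsub>P'\<^esub> q \<in> S \<and> p \<otimes>\<^bsub>C'\<^esub> q \<in> S"
    using circ_model[OF p q] add_closed p q e_closed by simp
  show "\<psi> (p \<otimes>\<^bsub>P'\<^esub> q) = \<psi> p \<oplus> \<psi> q"
    using hom_add[OF p q] .
  show "\<psi> (p \<otimes>\<^bsub>C'\<^esub> q) = \<psi> p \<cdot> \<psi> q"
    using circ_model[OF p q] circ_eq_cases[OF \<psi>_closed[OF p] \<psi>_closed[OF q]] fixed_iff[OF q]
      hom_add add_closed e_closed p q shift_model[OF p] by simp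
qed

lemma brace_iso_Z4:
  assumes y: "y \<in> A - fixed" and fixed: "fixed = {\<zero>, shift y}"
    and yy: "y \<oplus> y = shift y" and shift_shift_y: "shift (shift y) = \<zero>"
  shows "brace_iso P C Z4_add Z4_circ"
proof -
  define v where "v = shift y"
  define \<psi> where "\<psi> k = (if k = 0 then \<zero> else if k = 1 then y else if k = (2::int) then v else y \<oplus> v)"
    for k
  have yA: "y \<in> A" and v: "v \<in> fixed" and vA: "v \<in> A"
    using y shift_fixed fixed_closed by (auto simp: v_def)
  have vv: "v \<oplus> v = \<zero>"
    using fixed_double[OF v] .
  have yy2: "y \<oplus> (y \<oplus> t) = v \<oplus> t" and vv2: "v \<oplus> (v \<oplus> t) = t" if "t \<in> A" for t
    using that yA vA yy vv by (simp_all add: v_def P.m_assoc[symmetric])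
  have four: "k \<in> {0..3} \<Longrightarrow> k = 0 \<or> k = 1 \<or> k = 2 \<or> k = (3::int)" for k
    by auto
  have yv: "y \<oplus> v \<notin> fixed"
    using add_fixed_nonfixed[OF y v] by simp
  have shift_v: "shift v = \<zero>" and shift_yv: "shift (y \<oplus> v) = v"
    using shift_shift_y shift_add_fixed[OF yA v] yA by (simp_all add: v_def)
  have "v \<noteq> \<zero>"
    using card_fixed_gt_1 fixed by (auto simp: v_def)
  then have "card A = 4"
    using card_carrier fixed by (simp add: v_def)
  show ?thesis
  proof (rule brace_iso_model[where S = "{0..3}" and \<psi> = \<psi> and e = "\<lambda>k. (2 * k) mod 4"
        and N = "{0, 2}"])
    show "carrier Z4_add = {0..3}"
      by (simp add: Z4_add_def)
    show "card {0..3::int} = card A"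
      using \<open>card A = 4\<close> by simp
    show "A \<subseteq> \<psi> ` {0..3}"
    proof -
      have "A = fixed \<union> (\<lambda>c. y \<oplus> c) ` fixed"
        by (rule carrier_eq_fixed_union_coset[OF y])
      also have "\<dots> = {\<psi> 0, \<psi> 2, \<psi> 1, \<psi> 3}"
        using yA by (auto simp: fixed \<psi>_def v_def)
      finally show ?thesis
        by auto
    qed
    fix k l :: int assume k: "k \<in> {0..3}" and l: "l \<in> {0..3}"
    show "\<psi> k \<in> A"
      using yA vA by (simp add: \<psi>_def)
    show "k \<otimes>\<^bsub>Z4_add\<^esub> l \<in> {0..3}" "(2 * k) mod 4 \<in> {0..3}"
      by (simp_all add: Z4_add_def)
    show "\<psi> (k \<otimes>\<^bsub>Z4_add\<^esub> l) = \<psi> k \<oplus> \<psi> l"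
      using four[OF k] four[OF l]
      by (elim disjE) (simp_all add: Z4_add_def \<psi>_def yA vA yy2 vv2 P.m_ac vv yy[folded v_def])
    show "\<psi> k \<in> fixed \<longleftrightarrow> k \<in> {0, 2}"
      using four[OF k] y yv v by (auto simp: \<psi>_def)
    show "shift (\<psi> k) = \<psi> ((2 * k) mod 4)"
      using four[OF k] shift_v shift_yv by (auto simp: \<psi>_def v_def)
    show "k \<otimes>\<^bsub>Z4_circ\<^esub> l = (if l \<in> {0, 2} then k \<otimes>\<^bsub>Z4_add\<^esub> l
        else k \<otimes>\<^bsub>Z4_add\<^esub> l \<otimes>\<^bsub>Z4_add\<^esub> ((2 * k) mod 4))"
      using four[OF k] four[OF l] by (elim disjE) (simp_all add: Z4_add_def Z4_circ_def)
  qed simp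
qed

lemma brace_iso_Z2Z2:
  assumes y: "y \<in> A - fixed" and fixed: "fixed = {\<zero>, shift y}"
    and yy: "y \<oplus> y = \<zero>" and shift_shift_y: "shift (shift y) = \<zero>"
  shows "brace_iso P C Z2Z2_add Z2Z2_circ"
proof -
  define v where "v = shift y"
  define \<psi> where "\<psi> p = (if snd p = (0::int) then (if fst p = (0::int) then \<zero> else v)
      else (if fst p = 0 then y else y \<oplus> v))" for p
  define S where "S = {0..1::int} \<times> {0..1::int}"
  have yA: "y \<in> A" and v: "v \<in> fixed" and vA: "v \<in> A"
    using y shift_fixed fixed_closed by (auto simp: v_def)
  have vv: "v \<oplus> v = \<zero>"
    using fixed_double[OF v] .
  have yy2: "y \<oplus> (y \<oplus> t) = t" and vv2: "v \<oplus> (v \<oplus> t) = t" if "t \<in> A" for t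
    using that yA vA yy vv by (simp_all add: P.m_assoc[symmetric])
  have four: "p \<in> S \<Longrightarrow> p = (0, 0) \<or> p = (0, 1) \<or> p = (1, 0) \<or> p = (1, 1)" for p
    by (auto simp: S_def)
  have yv: "y \<oplus> v \<notin> fixed"
    using add_fixed_nonfixed[OF y v] by simp
  have shift_v: "shift v = \<zero>" and shift_yv: "shift (y \<oplus> v) = v"
    using shift_shift_y shift_add_fixed[OF yA v] yA by (simp_all add: v_def)
  have "v \<noteq> \<zero>"
    using card_fixed_gt_1 fixed by (auto simp: v_def)
  then have "card A = 4"
    using card_carrier fixed by (simp add: v_def)
  show ?thesis
  proof (rule brace_iso_model[where S = S and \<psi> = \<psi> and e = "\<lambda>p. (snd p, 0)"
        and N = "{p. snd p = 0}"])
    show "carrier Z2Z2_add = S"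
      by (simp add: Z2Z2_add_def S_def)
    show "finite S" "card S = card A"
      using \<open>card A = 4\<close> by (simp_all add: S_def)
    show "A \<subseteq> \<psi> ` S"
    proof -
      have "A = fixed \<union> (\<lambda>c. y \<oplus> c) ` fixed"
        by (rule carrier_eq_fixed_union_coset[OF y])
      also have "\<dots> = {\<psi> (0, 0), \<psi> (1, 0), \<psi> (0, 1), \<psi> (1, 1)}"
        using yA by (auto simp: fixed \<psi>_def v_def)
      finally show ?thesis
        by (auto simp: S_def)
    qed
    fix p q assume p: "p \<in> S" and q: "q \<in> S"
    show "\<psi> p \<in> A"
      using yA vA by (simp add: \<psi>_def)
    show "p \<otimes>\<^bsub>Z2Z2_add\<^esub> q \<in> S" "(snd p, 0) \<in> S"
      using four[OF p] four[OF q] by (auto simp: Z2Z2_add_def S_def)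
    show "\<psi> (p \<otimes>\<^bsub>Z2Z2_add\<^esub> q) = \<psi> p \<oplus> \<psi> q"
      using four[OF p] four[OF q]
      by (elim disjE) (simp_all add: Z2Z2_add_def \<psi>_def yA vA yy yy2 vv vv2 P.m_ac)
    show "\<psi> p \<in> fixed \<longleftrightarrow> p \<in> {p. snd p = 0}"
      using four[OF p] y yv v by (auto simp: \<psi>_def)
    show "shift (\<psi> p) = \<psi> (snd p, 0)"
      using four[OF p] shift_v shift_yv by (auto simp: \<psi>_def v_def)
    show "p \<otimes>\<^bsub>Z2Z2_circ\<^esub> q = (if q \<in> {p. snd p = 0} then p \<otimes>\<^bsub>Z2Z2_add\<^esub> q
        else p \<otimes>\<^bsub>Z2Z2_add\<^esub> q \<otimes>\<^bsub>Z2Z2_add\<^esub> (snd p, 0))"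
      using four[OF p] four[OF q] by (elim disjE) (simp_all add: Z2Z2_add_def Z2Z2_circ_def)
  qed
qed

lemma brace_iso_Z2Z4:
  assumes y: "y \<in> A - fixed" and u: "u \<in> fixed"
    and fixed: "fixed = {\<zero>, u, shift y, shift y \<oplus> u}" and card_fixed: "card fixed = 4"
    and yy: "y \<oplus> y = shift y" and shift_u: "shift u = \<zero>" and shift_shift_y: "shift (shift y) = u"
  shows "brace_iso P C Z2Z4_add Z2Z4_circ"
proof -
  define w where "w = shift y"
  define \<psi> where "\<psi> p = (if snd p = (0::int) then (if fst p = (0::int) then \<zero> else u)
     else if snd p = 1 then (if fst p = 0 then y else y \<oplus> u)
     else if snd p = 2 then (if fst p = 0 then w else w \<oplus> u)
     else (if fst p = 0 then y \<oplus> w else (y \<oplus> w) \<oplus> u))" for p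
  define S where "S = {0..1::int} \<times> {0..3::int}"
  define e where "e p = (eps4 (snd p), (2 * snd p) mod 4)" for p :: "int \<times> int"
  have yA: "y \<in> A" and w: "w \<in> fixed" and uA: "u \<in> A" and wA: "w \<in> A"
    using y u shift_fixed fixed_closed by (auto simp: w_def)
  have uu: "u \<oplus> u = \<zero>" and ww: "w \<oplus> w = \<zero>"
    using fixed_double u w by auto
  have yy2: "y \<oplus> (y \<oplus> t) = w \<oplus> t" and uu2: "u \<oplus> (u \<oplus> t) = t" and ww2: "w \<oplus> (w \<oplus> t) = t"
    if "t \<in> A" for t
    using that yA uA wA yy uu ww by (simp_all add: w_def P.m_assoc[symmetric])
  have eight: "p \<in> {(0,0), (1,0), (0,1), (1,1), (0,2), (1,2), (0,3), (1,3)}" if "p \<in> S" for p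
  proof -
    obtain a b where p: "p = (a, b)"
      by fastforce
    then have "0 \<le> a" "a \<le> 1" "0 \<le> b" "b \<le> 3"
      using that by (auto simp: S_def)
    then have "a = 0 \<or> a = 1" "b = 0 \<or> b = 1 \<or> b = 2 \<or> b = 3"
      by presburger+
    then show ?thesis
      using p by auto
  qed
  have nonfixed: "y \<notin> fixed" "y \<oplus> u \<notin> fixed" "y \<oplus> w \<notin> fixed" "y \<oplus> w \<oplus> u \<notin> fixed"
    using y add_fixed_nonfixed[OF y] u w fixed_add[OF w u] yA uA wA by (auto simp: P.m_assoc)
  have shift_y_add: "shift (y \<oplus> c) = w \<oplus> shift c" if "c \<in> fixed" for c
    using shift_add_fixed[OF yA that] by (simp add: w_def)
  have shifts: "shift w = u" "shift (w \<oplus> u) = u" "shift y = w" "shift (y \<oplus> u) = w"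
      "shift (y \<oplus> w) = w \<oplus> u" "shift (y \<oplus> w \<oplus> u) = w \<oplus> u"
    using shift_shift_y shift_u shift_add_fixed[OF wA u] shift_y_add u w wA uA yA
      shift_add_fixed[of "y \<oplus> w" u] by (simp_all add: w_def)
  show ?thesis
  proof (rule brace_iso_model[where S = S and \<psi> = \<psi> and e = e and N = "{p. snd p \<in> {0, 2}}"])
    show "carrier Z2Z4_add = S"
      by (simp add: Z2Z4_add_def S_def)
    show "finite S" "card S = card A"
      using card_carrier card_fixed by (simp_all add: S_def)
    show "A \<subseteq> \<psi> ` S"
    proof -
      have "A = fixed \<union> (\<lambda>c. y \<oplus> c) ` fixed"
        by (rule carrier_eq_fixed_union_coset[OF y])
      also have "\<dots> = {\<psi> (0,0), \<psi> (1,0), \<psi> (0,2), \<psi> (1,2), \<psi> (0,1), \<psi> (1,1), \<psi> (0,3), \<psi> (1,3)}"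
        using yA uA wA by (auto simp: fixed \<psi>_def w_def P.m_assoc)
      finally show ?thesis
        by (auto simp: S_def)
    qed
    fix p q assume p: "p \<in> S" and q: "q \<in> S"
    show "\<psi> p \<in> A"
      using yA uA wA by (simp add: \<psi>_def)
    show "p \<otimes>\<^bsub>Z2Z4_add\<^esub> q \<in> S" "e p \<in> S"
      using eight[OF p] eight[OF q] by (auto simp: Z2Z4_add_def S_def e_def eps4_def)
    show "\<psi> (p \<otimes>\<^bsub>Z2Z4_add\<^esub> q) = \<psi> p \<oplus> \<psi> q"
      using eight[OF p] eight[OF q]
      by (simp only: insert_iff empty_iff)
        (elim disjE; simp add: Z2Z4_add_def \<psi>_def yA uA wA yy[folded w_def] yy2 uu uu2 ww ww2 P.m_ac)
    show "\<psi> p \<in> fixed \<longleftrightarrow> p \<in> {p. snd p \<in> {0, 2}}"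
      using eight[OF p] nonfixed u w fixed_add[OF w u] by (auto simp: \<psi>_def)
    show "shift (\<psi> p) = \<psi> (e p)"
      using eight[OF p] shifts shift_u by (auto simp: \<psi>_def e_def eps4_def)
    show "p \<otimes>\<^bsub>Z2Z4_circ\<^esub> q = (if q \<in> {p. snd p \<in> {0, 2}} then p \<otimes>\<^bsub>Z2Z4_add\<^esub> q
        else p \<otimes>\<^bsub>Z2Z4_add\<^esub> q \<otimes>\<^bsub>Z2Z4_add\<^esub> e p)"
      using eight[OF p] eight[OF q]
      by (simp only: insert_iff empty_iff)
        (elim disjE; simp add: Z2Z4_add_def Z2Z4_circ_def e_def eps4_def)
  qed
qed

lemma classification_shift_image_trivial:
  assumes "card (shift ` fixed) = 1"
  shows "brace_iso P C Z4_add Z4_circ \<or> brace_iso P C Z2Z2_add Z2Z2_circ"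
proof -
  obtain i where "shift ` fixed = {i}"
    using assms by (rule card_1_singletonE)
  moreover have "\<zero> \<in> shift ` fixed"
    using zero_fixed shift_zero by (metis image_eqI)
  ultimately have image: "shift ` fixed = {\<zero>}"
    by simp
  then have fixed: "fixed = {\<zero>, shift base}"
    by (subst fixed_eq_shift_image_union) auto
  have "shift (shift base) = \<zero>"
    using image shift_fixed[OF base_closed] by blast
  moreover have "base \<oplus> base = \<zero> \<or> base \<oplus> base = shift base"
    using double_nonfixed[OF base_nonfixed] fixed by simp
  ultimately show ?thesis
    using brace_iso_Z4[OF base_nonfixed fixed] brace_iso_Z2Z2[OF base_nonfixed fixed] by blast
qed

lemma classification_shift_image_nontrivial:
  assumes card_image: "card (shift ` fixed) = 2"
  shows "brace_iso P C Z2Z4_add Z2Z4_circ"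
proof -
  define v where "v = shift base"
  have v: "v \<in> fixed"
    using shift_fixed by (simp add: v_def)
  have zero_image: "\<zero> \<in> shift ` fixed"
    using zero_fixed shift_zero by (metis image_eqI)
  then have "card (shift ` fixed - {\<zero>}) = 1"
    using card_image finite_fixed by simp
  then obtain u where "shift ` fixed - {\<zero>} = {u}"
    by (rule card_1_singletonE)
  then have image: "shift ` fixed = {\<zero>, u}" and "u \<noteq> \<zero>"
    using zero_image by auto
  have "u \<in> shift ` fixed"
    using image by simp
  then obtain c where "c \<in> fixed" "u = shift c"
    by blast
  then have u: "u \<in> fixed" "shift u = \<zero>"
    using shift_fixed fixed_closed shift_shift by auto
  have fixed: "fixed = {\<zero>, u, v, v \<oplus> u}"
    using image v fixed_closed by (subst fixed_eq_shift_image_union) (auto simp: v_def)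
  have "shift ` fixed \<subseteq> {c \<in> fixed. shift c = \<zero>}"
    using shift_fixed shift_shift fixed_closed by auto
  then have "card (shift ` fixed) \<le> card {c \<in> fixed. shift c = \<zero>}"
    using finite_fixed by (intro card_mono) auto
  then have "2 \<le> card {c \<in> fixed. shift c = \<zero>}"
    using card_image by simp
  then have card_fixed: "card fixed = 4"
    using card_shift_image_kernel_le card_fixed_le_shift_image card_image by simp
  have vA: "v \<in> A" and uA: "u \<in> A"
    using v u fixed_closed by auto
  have shift_v: "shift v = u"
  proof (rule ccontr)
    assume "shift v \<noteq> u"
    moreover have "shift v \<in> {\<zero>, u}"
      using image v by blast
    ultimately have "shift v = \<zero>"
      by blast
    then have "shift c = \<zero>" if "c \<in> fixed" for c
    proof -
      have "c = \<zero> \<or> c = u \<or> c = v \<or> c = v \<oplus> u"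
        using that fixed by blast
      then show ?thesis
        using \<open>shift v = \<zero>\<close> u shift_add_fixed[OF vA u(1)] by (elim disjE) simp_all
    qed
    then have "shift ` fixed = {\<zero>}"
      using zero_image by blast
    then show False
      using card_image by simp
  qed
  have "shift (base \<oplus> base) = u"
    using shift_double[OF base_nonfixed] shift_v by (simp add: v_def)
  moreover have "base \<oplus> base \<in> {\<zero>, u, v, v \<oplus> u}"
    using double_nonfixed[OF base_nonfixed] by (simp only: fixed)
  ultimately have "base \<oplus> base = v \<or> base \<oplus> base = v \<oplus> u"
    using u \<open>u \<noteq> \<zero>\<close> by auto
  then show ?thesis
  proof
    assume "base \<oplus> base = v"
    moreover have "shift (shift base) = u" "fixed = {\<zero>, u, shift base, shift base \<oplus> u}"
      using shift_v fixed by (simp_all only: v_def)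
    ultimately show ?thesis
      using brace_iso_Z2Z4[OF base_nonfixed u(1) _ card_fixed _ u(2)] by (simp add: v_def)
  next
    assume double_base: "base \<oplus> base = v \<oplus> u"
    txt \<open>Replacing \<open>base\<close> by \<open>base \<oplus> v\<close> reduces this case to the previous one.\<close>
    define y where "y = base \<oplus> v"
    have y: "y \<in> A - fixed"
      using add_fixed_nonfixed[OF base_nonfixed v] by (simp add: y_def)
    have shift_y: "shift y = v \<oplus> u"
      using shift_add_fixed[OF base_closed v] shift_v by (simp add: y_def v_def)
    have "y \<oplus> y = (base \<oplus> base) \<oplus> (v \<oplus> v)"
      using vA by (simp add: y_def P.m_ac)
    then have "y \<oplus> y = shift y"
      using double_base fixed_double[OF v] shift_y vA uA by simp
    moreover have "shift (shift y) = u"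
      using shift_y shift_add_fixed[OF vA u(1)] shift_v u uA by simp
    moreover have "shift y \<oplus> u = v"
      using shift_y fixed_double[OF u(1)] vA uA by (simp add: P.m_assoc)
    then have "fixed = {\<zero>, u, shift y, shift y \<oplus> u}"
      using fixed shift_y by (simp add: insert_commute)
    ultimately show ?thesis
      using brace_iso_Z2Z4[OF y u(1) _ card_fixed _ u(2)] by simp
  qed
qed

lemma classification:
  "brace_iso P C Z4_add Z4_circ \<or> brace_iso P C Z2Z2_add Z2Z2_circ
    \<or> brace_iso P C Z2Z4_add Z2Z4_circ"
proof -
  have "0 < card (shift ` fixed)"
    using finite_fixed zero_fixed by (simp add: card_gt_0_iff, blast)
  then have "card (shift ` fixed) = 1 \<or> card (shift ` fixed) = 2"
    using card_shift_image_le_2 by linarith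
  then show ?thesis
    using classification_shift_image_trivial classification_shift_image_nontrivial by blast
qed

end

theorem mainTheorem20:
  fixes P C :: "'a monoid"
  assumes "skew_brace P C"
    and "finite (carrier P)"
    and "comm_group P"
    and "card (theta_vertices P C) = 1"
  shows "brace_iso P C Z4_add Z4_circ
       \<or> brace_iso P C Z2Z2_add Z2Z2_circ
       \<or> brace_iso P C Z2Z4_add Z2Z4_circ"
proof -
  have "single_vertex_brace P C"
    using assms unfolding skew_brace_def
    by (intro single_vertex_brace.intro abelian_skew_brace.intro abelian_skew_brace_axioms.intro
        single_vertex_brace_axioms.intro) auto
  then show ?thesis
    by (rule single_vertex_brace.classification)
qed

end
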